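(* Let $n\ge 1$ and let $r_1,\ldots,r_n$ be independent Rademacher random variables (each equal to $\pm1$ with probability $1/2$). For $x\in\mathbb{R}^n$ and a positive integer $q$ define $$\mathbf{R}_q(x) = \mathbf{E}\Big(\sum_{i\neq j} x_i x_j r_i r_j\Big)^q,$$ where the sum runs over ordered pairs $(i,j)$ with $i,j\in\{1,\ldots,n\}$, $i\ne j$. Then for every positive integer $q$, $\mathbf{R}_q(x)$ is a Schur-concave function of $(x_1^2,\ldots,x_n^2)$.
   Context: A function $f$ on $[0,\infty)^n$ is Schur-concave if $f(a)\ge f(b)$ whenever $a$ is majorized by $b$ (the sum of the $k$ largest entries of $a$ is at most that of $b$ for every $k$, with equal total sums). *)

theory Defs
  imports Main "HOL-Library.FuncSet" Complex_Main
begin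

text \<open>Vectors in R^n are functions nat => real, only the coordinates 0..n-1 matter.\<close>

definition top_sum :: "nat \<Rightarrow> (nat \<Rightarrow> real) \<Rightarrow> nat \<Rightarrow> real" where
  "top_sum n a k = Max {sum a S | S. S \<subseteq> {..<n} \<and> card S = k}"

definition majorized :: "nat \<Rightarrow> (nat \<Rightarrow> real) \<Rightarrow> (nat \<Rightarrow> real) \<Rightarrow> bool" where
  "majorized n a b \<longleftrightarrow> (\<forall>k\<le>n. top_sum n a k \<le> top_sum n b k) \<and>
      (\<Sum>i<n. a i) = (\<Sum>i<n. b i)"

definition schur_concave :: "nat \<Rightarrow> ((nat \<Rightarrow> real) \<Rightarrow> real) \<Rightarrow> bool" where
  "schur_concave n f \<longleftrightarrow> (\<forall>a b. (\<forall>i<n. a i \<ge> 0) \<longrightarrow> (\<forall>i<n. b i \<ge> 0) \<longrightarrow>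
      majorized n a b \<longrightarrow> f a \<ge> f b)"

text \<open>R_q(x): expectation over independent Rademacher signs r_0..r_{n-1}, i.e. the
  uniform average over all 2^n sign vectors.\<close>
definition Rq :: "nat \<Rightarrow> nat \<Rightarrow> (nat \<Rightarrow> real) \<Rightarrow> real" where
  "Rq n q x = (1 / 2 ^ n) *
     (\<Sum>r\<in>PiE {..<n} (\<lambda>_. {-1, 1::real}).
        (\<Sum>(i,j)\<in>{(i,j). i < n \<and> j < n \<and> i \<noteq> j}. x i * x j * r i * r j) ^ q)"

end

theory Submission
  imports Defs "HOL-Combinatorics.Permutations"
begin

(* Write S(r) = (sum_i x_i r_i)^2 - sum_i x_i^2 for the off-diagonal sum. Fix two coordinates j, k
   and average over their signs first. Expanding S^q trinomially, 2^n R_q(x) becomes a combination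
   with nonnegative coefficients of products M * P, where M = E T^b (T^2 - A)^d is a moment of the
   remaining coordinates (T = sum of the other x_i r_i, A = sum of the other x_i^2) and P depends on
   x_j, x_k only through x_j^2 + x_k^2 and x_j x_k. For x >= 0 the moment M is nonnegative, because
   T^2 - A is again an off-diagonal sum, so T^b (T^2 - A)^d is a polynomial in the signs with
   nonnegative coefficients; and for fixed x_j^2 + x_k^2, P is nondecreasing in x_j x_k. Hence
   a |-> R_q(sqrt a) does not decrease when mass is moved from a coordinate a_j to a smaller one a_k
   without overtaking it. Such a function, being symmetric, is Schur-concave: if a is majorized by b,
   the decreasing rearrangement of b is carried to that of a by finitely many such transfers, each
   of which fixes one more coordinate (Hardy, Littlewood and Polya). *)

section \<open>Sign moments\<close>

abbreviation signs :: "'a set \<Rightarrow> ('a \<Rightarrow> real) set" where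
  "signs I \<equiv> PiE I (\<lambda>_. {-1, 1})"

lemma signs_square: "g \<in> signs I \<Longrightarrow> i \<in> I \<Longrightarrow> g i ^ 2 = 1"
  by (auto simp: PiE_iff)

lemma sum_PiE_insert:
  assumes "j \<notin> J"
  shows "(\<Sum>r\<in>PiE (insert j J) B. F r) = (\<Sum>y\<in>B j. \<Sum>g\<in>PiE J B. F (g(j := y)))"
proof -
  have "(\<Sum>r\<in>PiE (insert j J) B. F r) = (\<Sum>(y, g)\<in>B j \<times> PiE J B. F (g(j := y)))"
    unfolding PiE_insert_eq by (subst sum.reindex[OF inj_combinator[OF assms]]) (simp add: split_def)
  then show ?thesis
    by (simp add: sum.cartesian_product)
qed

lemma sum_offdiag_eq_square_minus_diag:
  fixes x g :: "'a \<Rightarrow> 'b::comm_ring_1"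
  assumes "finite I" "\<And>i. i \<in> I \<Longrightarrow> g i ^ 2 = 1"
  shows "(\<Sum>(i, l)\<in>{(i, l). i \<in> I \<and> l \<in> I \<and> i \<noteq> l}. x i * x l * g i * g l)
       = (\<Sum>i\<in>I. x i * g i) ^ 2 - (\<Sum>i\<in>I. x i ^ 2)"
proof -
  let ?h = "\<lambda>(i, l). x i * x l * g i * g l"
  have split: "I \<times> I = {(i, l). i \<in> I \<and> l \<in> I \<and> i \<noteq> l} \<union> (\<lambda>i. (i, i)) ` I"
    by auto
  have "?h (i, i) = x i ^ 2" if "i \<in> I" for i
  proof -
    have "?h (i, i) = x i ^ 2 * g i ^ 2"
      by (simp add: power2_eq_square mult_ac)
    then show ?thesis
      using assms(2)[OF that] by simp
  qed
  then have diag: "(\<Sum>p\<in>(\<lambda>i. (i, i)) ` I. ?h p) = (\<Sum>i\<in>I. x i ^ 2)"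
    by (subst sum.reindex) (auto intro: inj_onI)
  have "(\<Sum>i\<in>I. x i * g i) ^ 2 = (\<Sum>p\<in>I \<times> I. ?h p)"
    by (simp add: power2_eq_square sum_product sum.cartesian_product mult_ac)
  also have "\<dots> = (\<Sum>p\<in>{(i, l). i \<in> I \<and> l \<in> I \<and> i \<noteq> l}. ?h p) + (\<Sum>i\<in>I. x i ^ 2)"
    unfolding split diag[symmetric] using assms(1)
    by (intro sum.union_disjoint) (auto intro: finite_subset[of _ "I \<times> I"])
  finally show ?thesis by simp
qed

(* This class contains 1 and is closed under multiplication by a sign and under nonnegative
   combinations, hence contains every polynomial in the signs with nonnegative coefficients. *)
definition nonneg_sign_moments :: "'a set \<Rightarrow> (('a \<Rightarrow> real) \<Rightarrow> real) \<Rightarrow> bool" where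
  "nonneg_sign_moments I F \<longleftrightarrow> (\<forall>e. 0 \<le> (\<Sum>g\<in>signs I. F g * (\<Prod>i\<in>I. g i ^ e i)))"

lemma nonneg_sign_moments_imp_sum_nonneg:
  assumes "nonneg_sign_moments I F"
  shows "0 \<le> (\<Sum>g\<in>signs I. F g)"
proof -
  have "0 \<le> (\<Sum>g\<in>signs I. F g * (\<Prod>i\<in>I. g i ^ (\<lambda>_. 0::nat) i))"
    using assms unfolding nonneg_sign_moments_def by (rule spec)
  then show ?thesis
    by simp
qed

lemma nonneg_sign_moments_one:
  assumes "finite I"
  shows "nonneg_sign_moments I (\<lambda>_. 1)"
  unfolding nonneg_sign_moments_def
proof
  fix e
  have "0 \<le> (\<Prod>i\<in>I. \<Sum>y\<in>{-1, 1::real}. y ^ e i)"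
    by (intro prod_nonneg) (auto simp: minus_one_power_iff)
  also have "\<dots> = (\<Sum>g\<in>signs I. \<Prod>i\<in>I. g i ^ e i)"
    by (rule prod_sum_PiE) (use assms in auto)
  finally show "0 \<le> (\<Sum>g\<in>signs I. 1 * (\<Prod>i\<in>I. g i ^ e i))"
    by simp
qed

lemma nonneg_sign_moments_mult_sign:
  assumes "finite I" "j \<in> I" "nonneg_sign_moments I F"
  shows "nonneg_sign_moments I (\<lambda>g. F g * g j)"
  unfolding nonneg_sign_moments_def
proof
  fix e
  have "(\<Prod>i\<in>I. g i ^ (e(j := Suc (e j))) i) = (\<Prod>i\<in>I. (if i = j then g i else 1) * g i ^ e i)"
    for g :: "'a \<Rightarrow> real"
    by (rule prod.cong) auto
  then have "g j * (\<Prod>i\<in>I. g i ^ e i) = (\<Prod>i\<in>I. g i ^ (e(j := Suc (e j))) i)" for g :: "'a \<Rightarrow> real"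
    using assms(1,2) by (simp add: prod.distrib prod.delta)
  then show "0 \<le> (\<Sum>g\<in>signs I. F g * g j * (\<Prod>i\<in>I. g i ^ e i))"
    using assms(3) unfolding nonneg_sign_moments_def by (simp add: mult.assoc)
qed

lemma nonneg_sign_moments_sum:
  assumes "finite K" "\<And>k. k \<in> K \<Longrightarrow> nonneg_sign_moments I (F k)" "\<And>k. k \<in> K \<Longrightarrow> 0 \<le> c k"
  shows "nonneg_sign_moments I (\<lambda>g. \<Sum>k\<in>K. c k * F k g)"
  unfolding nonneg_sign_moments_def
proof
  fix e
  have "0 \<le> (\<Sum>k\<in>K. c k * (\<Sum>g\<in>signs I. F k g * (\<Prod>i\<in>I. g i ^ e i)))"
    by (rule sum_nonneg, rule mult_nonneg_nonneg) (use assms in \<open>auto simp: nonneg_sign_moments_def\<close>)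
  also have "\<dots> = (\<Sum>k\<in>K. \<Sum>g\<in>signs I. c k * (F k g * (\<Prod>i\<in>I. g i ^ e i)))"
    by (simp add: sum_distrib_left)
  also have "\<dots> = (\<Sum>g\<in>signs I. (\<Sum>k\<in>K. c k * F k g) * (\<Prod>i\<in>I. g i ^ e i))"
    by (subst sum.swap) (simp add: sum_distrib_right mult.assoc)
  finally show "0 \<le> (\<Sum>g\<in>signs I. (\<Sum>k\<in>K. c k * F k g) * (\<Prod>i\<in>I. g i ^ e i))" .
qed

lemma nonneg_sign_moments_mult_linear:
  assumes "finite I" "\<And>i. i \<in> I \<Longrightarrow> 0 \<le> x i" "nonneg_sign_moments I F"
  shows "nonneg_sign_moments I (\<lambda>g. F g * (\<Sum>i\<in>I. x i * g i))"
proof -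
  have "nonneg_sign_moments I (\<lambda>g. \<Sum>i\<in>I. x i * (F g * g i))"
    using assms by (intro nonneg_sign_moments_sum nonneg_sign_moments_mult_sign)
  then show ?thesis
    by (simp add: sum_distrib_left mult_ac)
qed

lemma nonneg_sign_moments_mult_offdiag:
  assumes "finite I" "\<And>i. i \<in> I \<Longrightarrow> 0 \<le> x i" "nonneg_sign_moments I F"
  shows "nonneg_sign_moments I
           (\<lambda>g. F g * (\<Sum>(i, l)\<in>{(i, l). i \<in> I \<and> l \<in> I \<and> i \<noteq> l}. x i * x l * g i * g l))"
proof -
  let ?D = "{(i, l). i \<in> I \<and> l \<in> I \<and> i \<noteq> l}"
  have "finite ?D"
    using assms(1) by (auto intro: finite_subset[of _ "I \<times> I"])
  then have "nonneg_sign_moments I (\<lambda>g. \<Sum>p\<in>?D. (x (fst p) * x (snd p)) * (F g * g (fst p) * g (snd p)))"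
    using assms by (intro nonneg_sign_moments_sum) (auto intro!: nonneg_sign_moments_mult_sign)
  then show ?thesis
    by (simp add: sum_distrib_left mult_ac split_def)
qed

definition sign_moment :: "'a set \<Rightarrow> ('a \<Rightarrow> real) \<Rightarrow> nat \<Rightarrow> nat \<Rightarrow> real" where
  "sign_moment I x b d =
     (\<Sum>g\<in>signs I. (\<Sum>i\<in>I. x i * g i) ^ b * ((\<Sum>i\<in>I. x i * g i) ^ 2 - (\<Sum>i\<in>I. x i ^ 2)) ^ d)"

lemma sign_moment_nonneg:
  assumes "finite I" "\<And>i. i \<in> I \<Longrightarrow> 0 \<le> x i"
  shows "0 \<le> sign_moment I x b d"
proof -
  let ?T = "\<lambda>g. \<Sum>i\<in>I. x i * g i"
  let ?S = "\<lambda>g. \<Sum>(i, l)\<in>{(i, l). i \<in> I \<and> l \<in> I \<and> i \<noteq> l}. x i * x l * g i * g l"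
  have powers: "nonneg_sign_moments I (\<lambda>g. ?T g ^ b)"
  proof (induction b)
    case (Suc b)
    then show ?case
      using nonneg_sign_moments_mult_linear[OF assms Suc] by (simp add: mult.commute)
  qed (use nonneg_sign_moments_one[OF assms(1)] in simp)
  have "nonneg_sign_moments I (\<lambda>g. ?T g ^ b * ?S g ^ d)"
  proof (induction d)
    case (Suc d)
    then show ?case
      using nonneg_sign_moments_mult_offdiag[OF assms Suc] by (simp add: mult_ac)
  qed (use powers in simp)
  then have "0 \<le> (\<Sum>g\<in>signs I. ?T g ^ b * ?S g ^ d)"
    by (rule nonneg_sign_moments_imp_sum_nonneg)
  also have "\<dots> = sign_moment I x b d"
    unfolding sign_moment_def
  proof (intro sum.cong refl)
    fix g assume "g \<in> signs I"
    then have "?S g = ?T g ^ 2 - (\<Sum>i\<in>I. x i ^ 2)"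
      using assms(1) by (intro sum_offdiag_eq_square_minus_diag) (auto intro: signs_square)
    then show "?T g ^ b * ?S g ^ d = ?T g ^ b * (?T g ^ 2 - (\<Sum>i\<in>I. x i ^ 2)) ^ d"
      by simp
  qed
  finally show ?thesis .
qed

section \<open>Decomposition of R_q along two coordinates\<close>

lemma power_add_minus_power_mono:
  fixes t t' :: "'a::linordered_idom"
  assumes "0 \<le> t" "t \<le> t'"
  shows "t ^ k + (- t) ^ k \<le> t' ^ k + (- t') ^ k"
proof (cases "even k")
  case True
  with assms show ?thesis
    by (simp add: power_mono)
qed simp

lemma even_part_power_shift_mono:
  fixes s t t' :: "'a::linordered_idom"
  assumes "0 \<le> s" "0 \<le> t" "t \<le> t'"
  shows "t ^ a * (s + t) ^ m + (- t) ^ a * (s - t) ^ m \<le> t' ^ a * (s + t') ^ m + (- t') ^ a * (s - t') ^ m"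
proof -
  have expand: "t ^ a * (s + t) ^ m + (- t) ^ a * (s - t) ^ m
      = (\<Sum>i\<le>m. of_nat (m choose i) * s ^ (m - i) * (t ^ (a + i) + (- t) ^ (a + i)))" for t :: 'a
    using binomial_ring[of t s m] binomial_ring[of "- t" s m]
    by (simp add: add.commute sum_distrib_left sum.distrib[symmetric] power_add algebra_simps)
  show ?thesis
    unfolding expand using assms
    by (intro sum_mono mult_left_mono power_add_minus_power_mono) auto
qed

definition pair_sign_sum :: "nat \<Rightarrow> nat \<Rightarrow> real \<Rightarrow> real \<Rightarrow> real" where
  "pair_sign_sum a b u v = (\<Sum>y\<in>{-1, 1}. \<Sum>z\<in>{-1, 1}. (2 * y * z * u * v) ^ a * (2 * (y * u + z * v)) ^ b)"

lemma pair_sign_sum_odd: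
  assumes "odd b"
  shows "pair_sign_sum a b u v = 0"
proof -
  have "(2 * (- w)) ^ b = - ((2 * w) ^ b)" for w :: real
    using assms by (simp add: power_minus_odd)
  from this[of "u + v"] this[of "u - v"] show ?thesis
    unfolding pair_sign_sum_def by (simp add: algebra_simps)
qed

lemma pair_sign_sum_even:
  assumes "b = 2 * m"
  shows "pair_sign_sum a b u v = 2 * 4 ^ m *
    ((2 * u * v) ^ a * (u\<^sup>2 + v\<^sup>2 + 2 * u * v) ^ m + (- (2 * u * v)) ^ a * (u\<^sup>2 + v\<^sup>2 - 2 * u * v) ^ m)"
proof -
  define h where "h w = (2 * w * u * v) ^ a * (4 ^ m * (u\<^sup>2 + v\<^sup>2 + 2 * w * u * v) ^ m)" for w :: real
  have "(2 * (y * u + z * v)) ^ b = 4 ^ m * (u\<^sup>2 + v\<^sup>2 + 2 * (y * z) * u * v) ^ m"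
    if "y \<in> {-1, 1}" "z \<in> {-1, 1}" for y z :: real
  proof -
    have square: "(y * u + z * v)\<^sup>2 = u\<^sup>2 + v\<^sup>2 + 2 * (y * z) * u * v"
      using that by (auto simp: power2_eq_square algebra_simps)
    show ?thesis
      unfolding assms power_mult power_mult_distrib square by simp
  qed
  then have "pair_sign_sum a b u v = (\<Sum>y\<in>{-1, 1}. \<Sum>z\<in>{-1, 1}. h (y * z))"
    unfolding pair_sign_sum_def h_def by (intro sum.cong refl) (simp add: mult.assoc)
  also have "\<dots> = 2 * (h 1 + h (-1))"
    by simp
  also have "\<dots> = 2 * 4 ^ m *
    ((2 * u * v) ^ a * (u\<^sup>2 + v\<^sup>2 + 2 * u * v) ^ m + (- (2 * u * v)) ^ a * (u\<^sup>2 + v\<^sup>2 - 2 * u * v) ^ m)"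
    unfolding h_def by (simp add: algebra_simps)
  finally show ?thesis .
qed

lemma pair_sign_sum_mono:
  assumes "0 \<le> u" "0 \<le> v" "u\<^sup>2 + v\<^sup>2 = u'\<^sup>2 + v'\<^sup>2" "u * v \<le> u' * v'"
  shows "pair_sign_sum a b u v \<le> pair_sign_sum a b u' v'"
proof (cases "even b")
  case True
  then obtain m where b: "b = 2 * m"
    by blast
  have "(2 * u * v) ^ a * (u\<^sup>2 + v\<^sup>2 + 2 * u * v) ^ m + (- (2 * u * v)) ^ a * (u\<^sup>2 + v\<^sup>2 - 2 * u * v) ^ m
      \<le> (2 * u' * v') ^ a * (u\<^sup>2 + v\<^sup>2 + 2 * u' * v') ^ m + (- (2 * u' * v')) ^ a * (u\<^sup>2 + v\<^sup>2 - 2 * u' * v') ^ m"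
    using even_part_power_shift_mono[of "u\<^sup>2 + v\<^sup>2" "2 * u * v" "2 * u' * v'" a m] assms
    by (simp add: mult.assoc)
  then show ?thesis
    unfolding pair_sign_sum_even[OF b] assms(3) by simp
qed (simp add: pair_sign_sum_odd)

lemma trinomial_expansion:
  fixes p r t :: "'a::comm_semiring_1"
  shows "(p + r + t) ^ q = (\<Sum>a\<le>q. \<Sum>b\<le>q - a.
           of_nat (q choose a) * of_nat ((q - a) choose b) * p ^ a * r ^ b * t ^ (q - a - b))"
proof -
  have "(p + (r + t)) ^ q = (\<Sum>a\<le>q. of_nat (q choose a) * p ^ a * (r + t) ^ (q - a))"
    by (rule binomial_ring)
  also have "\<dots> = (\<Sum>a\<le>q. \<Sum>b\<le>q - a.
      of_nat (q choose a) * of_nat ((q - a) choose b) * p ^ a * r ^ b * t ^ (q - a - b))"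
    by (simp add: binomial_ring sum_distrib_left mult_ac)
  finally show ?thesis
    by (simp add: add.assoc)
qed

lemma sum_swap_triangle:
  "(\<Sum>x\<in>X. \<Sum>a\<le>q. \<Sum>b\<le>q - a. f x a b) = (\<Sum>a\<le>q. \<Sum>b\<le>q - a. \<Sum>x\<in>X. f x a b)"
  by (subst sum.swap) (simp add: sum.swap[of _ X])

lemma Rq_eq_sum_signs:
  "Rq n q x = (\<Sum>r\<in>signs {..<n}. ((\<Sum>i<n. x i * r i)\<^sup>2 - (\<Sum>i<n. x i ^ 2)) ^ q) / 2 ^ n"
proof -
  have "(\<Sum>(i, j)\<in>{(i, j). i < n \<and> j < n \<and> i \<noteq> j}. x i * x j * r i * r j)
      = (\<Sum>i<n. x i * r i)\<^sup>2 - (\<Sum>i<n. x i ^ 2)" if "r \<in> signs {..<n}" for r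
    using sum_offdiag_eq_square_minus_diag[of "{..<n}" r x] that by (simp add: signs_square)
  then show ?thesis
    unfolding Rq_def by (simp cong: sum.cong)
qed

lemma Rq_cong:
  assumes "\<And>i. i < n \<Longrightarrow> x i = x' i"
  shows "Rq n q x = Rq n q x'"
  unfolding Rq_eq_sum_signs using assms by simp

lemma PiE_const_comp_permutes:
  assumes "f \<in> PiE A (\<lambda>_. B)" "p permutes A"
  shows "f \<circ> p \<in> PiE A (\<lambda>_. B)"
  using assms permutes_in_image[OF assms(2)] permutes_not_in[OF assms(2)]
  by (auto simp: PiE_iff extensional_def)

lemma Rq_permute:
  assumes p: "p permutes {..<n}"
  shows "Rq n q (\<lambda>i. x (p i)) = Rq n q x"
proof -
  let ?G = "\<lambda>r. ((\<Sum>i<n. x i * r i)\<^sup>2 - (\<Sum>i<n. x i ^ 2)) ^ q"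
  have p': "inv p permutes {..<n}"
    using permutes_inv[OF p] .
  have "(\<Sum>i<n. x (p i) * r i) = (\<Sum>i<n. x i * (r \<circ> inv p) i)" for r
    using sum.permute[OF p, of "\<lambda>i. x i * (r \<circ> inv p) i"] permutes_inverses[OF p] by (simp add: o_def)
  moreover have "(\<Sum>i<n. x (p i) ^ 2) = (\<Sum>i<n. x i ^ 2)"
    using sum.permute[OF p, of "\<lambda>i. x i ^ 2"] by (simp add: o_def)
  moreover have "(\<Sum>r\<in>signs {..<n}. ?G (r \<circ> inv p)) = (\<Sum>r\<in>signs {..<n}. ?G r)"
    by (rule sum.reindex_bij_witness[where i = "\<lambda>r. r \<circ> p" and j = "\<lambda>r. r \<circ> inv p"])
      (use PiE_const_comp_permutes[OF _ p] PiE_const_comp_permutes[OF _ p'] permutes_inv_o[OF p] in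
        \<open>simp_all add: o_assoc[symmetric]\<close>)
  ultimately show ?thesis
    unfolding Rq_eq_sum_signs by simp
qed

lemma Rq_split_pair:
  assumes "j < n" "k < n" "j \<noteq> k"
  shows "2 ^ n * Rq n q x = (\<Sum>a\<le>q. \<Sum>b\<le>q - a. of_nat (q choose a) * of_nat ((q - a) choose b) *
           sign_moment ({..<n} - {j, k}) x b (q - a - b) * pair_sign_sum a b (x j) (x k))"
proof -
  define I where "I = {..<n} - {j, k}"
  let ?T = "\<lambda>g. \<Sum>i\<in>I. x i * g i"
  let ?A = "\<Sum>i\<in>I. x i ^ 2"
  let ?C = "\<lambda>a b. of_nat (q choose a) * of_nat ((q - a) choose b) :: real"
  let ?P = "\<lambda>a b y z. (2 * y * z * x j * x k) ^ a * (2 * (y * x j + z * x k)) ^ b"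
  let ?F = "\<lambda>r. ((\<Sum>i<n. x i * r i)\<^sup>2 - (\<Sum>i<n. x i ^ 2)) ^ q"
  have I: "{..<n} = insert j (insert k I)" "j \<notin> insert k I" "k \<notin> I" "finite I"
    using assms unfolding I_def by auto
  have expand: "?F (g(k := z, j := y)) =
      (\<Sum>a\<le>q. \<Sum>b\<le>q - a. ?C a b * ?P a b y z * (?T g ^ b * (?T g ^ 2 - ?A) ^ (q - a - b)))"
    if "y \<in> {-1, 1}" "z \<in> {-1, 1}" for y z g
  proof -
    have "(\<Sum>i\<in>I. x i * (g(k := z, j := y)) i) = ?T g"
      using I by (intro sum.cong) auto
    then have linear: "(\<Sum>i<n. x i * (g(k := z, j := y)) i) = y * x j + z * x k + ?T g"
      using I assms(3) by (simp add: mult.commute)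
    have diagonal: "(\<Sum>i<n. x i ^ 2) = x j ^ 2 + x k ^ 2 + ?A"
      using I by simp
    have regroup: "(y * x j + z * x k + t)\<^sup>2 - (x j ^ 2 + x k ^ 2 + ?A)
        = 2 * y * z * x j * x k + 2 * (y * x j + z * x k) * t + (t\<^sup>2 - ?A)" for t
      using that by (auto simp: power2_eq_square algebra_simps)
    have "?F (g(k := z, j := y))
        = (2 * y * z * x j * x k + 2 * (y * x j + z * x k) * ?T g + (?T g ^ 2 - ?A)) ^ q"
      unfolding linear diagonal regroup ..
    then show ?thesis
      unfolding trinomial_expansion by (simp add: power_mult_distrib mult_ac)
  qed
  have "2 ^ n * Rq n q x = (\<Sum>r\<in>signs (insert j (insert k I)). ?F r)"
    unfolding Rq_eq_sum_signs I(1) by simp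
  also have "\<dots> = (\<Sum>y\<in>{-1, 1}. \<Sum>z\<in>{-1, 1}. \<Sum>g\<in>signs I. ?F (g(k := z, j := y)))"
    by (simp add: sum_PiE_insert[OF I(2)] sum_PiE_insert[OF I(3)])
  also have "\<dots> = (\<Sum>y\<in>{-1, 1}. \<Sum>z\<in>{-1, 1}. \<Sum>a\<le>q. \<Sum>b\<le>q - a.
      ?C a b * ?P a b y z * sign_moment I x b (q - a - b))"
  proof (intro sum.cong refl)
    fix y z :: real
    assume signs_yz: "y \<in> {-1, 1}" "z \<in> {-1, 1}"
    have "(\<Sum>g\<in>signs I. ?F (g(k := z, j := y))) = (\<Sum>g\<in>signs I. \<Sum>a\<le>q. \<Sum>b\<le>q - a.
        ?C a b * ?P a b y z * (?T g ^ b * (?T g ^ 2 - ?A) ^ (q - a - b)))"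
      by (rule sum.cong[OF refl]) (rule expand[OF signs_yz])
    also have "\<dots> = (\<Sum>a\<le>q. \<Sum>b\<le>q - a. ?C a b * ?P a b y z * sign_moment I x b (q - a - b))"
      unfolding sign_moment_def by (simp add: sum_swap_triangle sum_distrib_left)
    finally show "(\<Sum>g\<in>signs I. ?F (g(k := z, j := y))) =
        (\<Sum>a\<le>q. \<Sum>b\<le>q - a. ?C a b * ?P a b y z * sign_moment I x b (q - a - b))" .
  qed
  also have "\<dots> = (\<Sum>a\<le>q. \<Sum>b\<le>q - a. ?C a b * sign_moment I x b (q - a - b) * pair_sign_sum a b (x j) (x k))"
    unfolding sum_swap_triangle pair_sign_sum_def
    by (intro sum.cong refl) (simp only: sum_distrib_left mult_ac)
  finally show ?thesis
    unfolding I_def .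
qed

lemma Rq_mono_pair:
  assumes "j < n" "k < n" "j \<noteq> k"
    and "\<And>i. i < n \<Longrightarrow> 0 \<le> x i"
    and same: "\<And>i. i < n \<Longrightarrow> i \<noteq> j \<Longrightarrow> i \<noteq> k \<Longrightarrow> x' i = x i"
    and "(x j)\<^sup>2 + (x k)\<^sup>2 = (x' j)\<^sup>2 + (x' k)\<^sup>2" "x j * x k \<le> x' j * x' k"
  shows "Rq n q x \<le> Rq n q x'"
proof -
  have moments: "sign_moment ({..<n} - {j, k}) x' = sign_moment ({..<n} - {j, k}) x"
    unfolding sign_moment_def using same by (intro ext) simp
  have "2 ^ n * Rq n q x \<le> 2 ^ n * Rq n q x'"
    unfolding Rq_split_pair[OF assms(1-3)] moments using assms
    by (intro sum_mono mult_left_mono pair_sign_sum_mono mult_nonneg_nonneg sign_moment_nonneg) auto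
  then show ?thesis
    by simp
qed

section \<open>Majorization by transfers\<close>

lemma antimono_on_lessThanI:
  fixes c :: "nat \<Rightarrow> 'a::order"
  assumes "\<And>i. Suc i < n \<Longrightarrow> c (Suc i) \<le> c i"
  shows "antimono_on {..<n} c"
proof (rule monotone_onI)
  fix i j
  assume "i \<in> {..<n}" "j \<in> {..<n}" "i \<le> j"
  from \<open>i \<le> j\<close> \<open>j \<in> {..<n}\<close> show "c j \<le> c i"
    by (induction j rule: dec_induct) (auto intro: order_trans assms)
qed

lemma obtain_antimono_permutation:
  fixes a :: "nat \<Rightarrow> 'a::linorder"
  obtains p where "p permutes {..<n}" "antimono_on {..<n} (\<lambda>i. a (p i))"
proof -
  define xs where "xs = map a [0..<n]"
  have "mset (rev (sort xs)) = mset xs"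
    by simp
  then obtain p where p: "p permutes {..<length xs}" "permute_list p xs = rev (sort xs)"
    by (rule mset_eq_permutation)
  have n: "length xs = n"
    unfolding xs_def by simp
  have nth: "rev (sort xs) ! i = a (p i)" if "i < n" for i
    using permute_list_nth[OF p(1)] p(2) permutes_in_image[OF p(1)] that
    by (auto simp: n xs_def)
  have "sorted_wrt (\<ge>) (rev (sort xs))"
    by (simp add: sorted_wrt_rev)
  then have "antimono_on {..<n} (\<lambda>i. a (p i))"
    by (intro monotone_onI) (auto simp: nth[symmetric] n sorted_wrt_iff_nth_less le_less)
  with p(1) n show thesis
    using that by simp
qed

lemma top_sum_permute:
  assumes p: "p permutes {..<n}"
  shows "top_sum n (\<lambda>i. a (p i)) k = top_sum n a k"
proof -
  have subset: "{sum (\<lambda>i. b (s i)) S | S. S \<subseteq> {..<n} \<and> card S = k} \<subseteq> {sum b S | S. S \<subseteq> {..<n} \<and> card S = k}"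
    if s: "s permutes {..<n}" for s and b :: "nat \<Rightarrow> real"
  proof
    fix t
    assume "t \<in> {sum (\<lambda>i. b (s i)) S | S. S \<subseteq> {..<n} \<and> card S = k}"
    then obtain S where S: "S \<subseteq> {..<n}" "card S = k" "t = sum (\<lambda>i. b (s i)) S"
      by blast
    have "inj_on s S"
      using permutes_inj[OF s] by (rule inj_on_subset) simp
    then have "sum (\<lambda>i. b (s i)) S = sum b (s ` S)" "card (s ` S) = k"
      using S(2) by (simp_all add: sum.reindex card_image)
    moreover have "s ` S \<subseteq> {..<n}"
      using S(1) permutes_in_image[OF s] by auto
    ultimately show "t \<in> {sum b S | S. S \<subseteq> {..<n} \<and> card S = k}"
      using S(3) by blast
  qed
  have "{sum a S | S. S \<subseteq> {..<n} \<and> card S = k} \<subseteq> {sum (\<lambda>i. a (p i)) S | S. S \<subseteq> {..<n} \<and> card S = k}"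
    using subset[OF permutes_inv[OF p], of "\<lambda>i. a (p i)"] by (simp add: permutes_inverses[OF p])
  with subset[OF p, of a] show ?thesis
    unfolding top_sum_def by (simp add: subset_antisym)
qed

lemma sum_le_sum_lessThan_if_antimono:
  fixes a :: "nat \<Rightarrow> real"
  assumes a: "antimono_on {..<n} a" and S: "S \<subseteq> {..<n}" "card S = m"
  shows "sum a S \<le> (\<Sum>i<m. a i)"
proof (cases "m = 0")
  case True
  with S show ?thesis
    using finite_subset[OF S(1)] by simp
next
  case False
  let ?c = "a (m - 1)"
  have fin: "finite S"
    using S(1) finite_subset by blast
  have "m \<le> n"
    using card_mono[OF _ S(1)] S(2) by simp
  have "card (S - {..<m}) = card ({..<m} - S)"
    using card_Int_Diff[OF fin, of "{..<m}"] card_Int_Diff[of "{..<m}" S] S(2)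
    by (simp add: inf_commute)
  moreover have "sum a (S - {..<m}) \<le> of_nat (card (S - {..<m})) * ?c"
    using S(1) False \<open>m \<le> n\<close> by (intro sum_bounded_above monotone_onD[OF a]) auto
  ultimately have "sum a (S - {..<m}) \<le> of_nat (card ({..<m} - S)) * ?c"
    by simp
  moreover have "of_nat (card ({..<m} - S)) * ?c \<le> sum a ({..<m} - S)"
    using False \<open>m \<le> n\<close> by (intro sum_bounded_below monotone_onD[OF a]) auto
  moreover have "sum a S = sum a (S \<inter> {..<m}) + sum a (S - {..<m})"
    using fin by (rule sum.Int_Diff)
  moreover have "(\<Sum>i<m. a i) = sum a (S \<inter> {..<m}) + sum a ({..<m} - S)"
    using sum.Int_Diff[of "{..<m}" a S] by (simp add: inf_commute)
  ultimately show ?thesis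
    by linarith
qed

lemma top_sum_antimono:
  fixes a :: "nat \<Rightarrow> real"
  assumes "antimono_on {..<n} a" "m \<le> n"
  shows "top_sum n a m = (\<Sum>i<m. a i)"
  unfolding top_sum_def
proof (rule Max_eqI)
  have "{sum a S | S. S \<subseteq> {..<n} \<and> card S = m} \<subseteq> sum a ` Pow {..<n}"
    by auto
  then show "finite {sum a S | S. S \<subseteq> {..<n} \<and> card S = m}"
    by (rule finite_subset) simp
  show "(\<Sum>i<m. a i) \<in> {sum a S | S. S \<subseteq> {..<n} \<and> card S = m}"
    using assms(2) by force
qed (use sum_le_sum_lessThan_if_antimono[OF assms(1)] in blast)

definition prefix_majorized :: "nat \<Rightarrow> (nat \<Rightarrow> real) \<Rightarrow> (nat \<Rightarrow> real) \<Rightarrow> bool" where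
  "prefix_majorized n a b \<longleftrightarrow>
     (\<forall>m\<le>n. (\<Sum>i<m. a i) \<le> (\<Sum>i<m. b i)) \<and> (\<Sum>i<n. a i) = (\<Sum>i<n. b i)"

lemma majorized_imp_prefix_majorized:
  assumes "antimono_on {..<n} a" "antimono_on {..<n} b" "majorized n a b"
  shows "prefix_majorized n a b"
  using assms top_sum_antimono[OF assms(1)] top_sum_antimono[OF assms(2)]
  unfolding majorized_def prefix_majorized_def by auto

lemma majorized_permute:
  assumes "p permutes {..<n}" "p' permutes {..<n}"
  shows "majorized n (\<lambda>i. a (p i)) (\<lambda>i. b (p' i)) \<longleftrightarrow> majorized n a b"
  using sum.permute[OF assms(1), of a] sum.permute[OF assms(2), of b]
  unfolding majorized_def top_sum_permute[OF assms(1)] top_sum_permute[OF assms(2)]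
  by (simp add: o_def)

definition transfer :: "(nat \<Rightarrow> real) \<Rightarrow> nat \<Rightarrow> nat \<Rightarrow> real \<Rightarrow> nat \<Rightarrow> real" where
  "transfer c j k d = c(j := c j - d, k := c k + d)"

lemma prefix_majorized_obtain_transfer:
  assumes "prefix_majorized n a b" "\<exists>i<n. a i \<noteq> b i"
  obtains j k where "j < k" "k < n" "a j < b j" "b k < a k" "\<And>i. j < i \<Longrightarrow> i < k \<Longrightarrow> a i = b i"
proof -
  have prefix: "\<And>m. m \<le> n \<Longrightarrow> (\<Sum>i<m. a i) \<le> (\<Sum>i<m. b i)" and total: "(\<Sum>i<n. a i) = (\<Sum>i<n. b i)"
    using assms(1) unfolding prefix_majorized_def by auto
  have "\<exists>k<n. b k < a k"
  proof (rule ccontr)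
    assume "\<not> (\<exists>k<n. b k < a k)"
    then have le: "\<forall>i\<in>{..<n}. a i \<le> b i"
      by (meson lessThan_iff not_less)
    with assms(2) have "\<exists>i\<in>{..<n}. a i < b i"
      by (auto simp: less_le)
    with le have "(\<Sum>i<n. a i) < (\<Sum>i<n. b i)"
      by (intro sum_strict_mono_ex1) auto
    with total show False
      by simp
  qed
  define k where "k = (LEAST k. k < n \<and> b k < a k)"
  have k: "k < n" "b k < a k"
    using LeastI_ex[OF \<open>\<exists>k<n. b k < a k\<close>] unfolding k_def by auto
  have below_k: "a i \<le> b i" if "i < k" for i
    using not_less_Least[of i "\<lambda>k. k < n \<and> b k < a k"] that k(1) unfolding k_def[symmetric] by auto
  have "\<exists>j<k. a j < b j"
  proof (rule ccontr)
    assume "\<not> (\<exists>j<k. a j < b j)"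
    then have "(\<Sum>i<k. a i) = (\<Sum>i<k. b i)"
      using below_k by (intro sum.cong) (auto intro: order.antisym simp flip: not_less)
    then have "(\<Sum>i<Suc k. b i) < (\<Sum>i<Suc k. a i)"
      using k by simp
    with prefix[of "Suc k"] k(1) show False
      by simp
  qed
  define J where "J = {j. j < k \<and> a j < b j}"
  have J: "finite J" "J \<noteq> {}"
    using \<open>\<exists>j<k. a j < b j\<close> unfolding J_def by auto
  have j: "Max J < k" "a (Max J) < b (Max J)"
    using Max_in[OF J] unfolding J_def by auto
  have "a i = b i" if "Max J < i" "i < k" for i
  proof (rule ccontr)
    assume "a i \<noteq> b i"
    with below_k[of i] that have "i \<in> J"
      unfolding J_def by auto
    with Max_ge[OF J(1)] that show False
      by fastforce
  qed
  with j k show thesis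
    using that by blast
qed

lemma transfer_antimono:
  assumes a: "antimono_on {..<n} a" and b: "antimono_on {..<n} b"
    and jk: "j < k" "k < n" and d: "d \<le> b j - a j" "d \<le> a k - b k" "0 \<le> d"
    and between: "\<And>i. j < i \<Longrightarrow> i < k \<Longrightarrow> a i = b i"
  shows "antimono_on {..<n} (transfer b j k d)"
proof (rule antimono_on_lessThanI)
  fix i
  assume i: "Suc i < n"
  have steps: "a (Suc i) \<le> a i" "b (Suc i) \<le> b i"
    using i by (auto intro: monotone_onD[OF a] monotone_onD[OF b])
  have "a k \<le> a j"
    using jk by (auto intro: monotone_onD[OF a])
  then consider "i = j" "Suc i = k" | "i = j" "Suc i < k" | "Suc i = j" | "i = k"
    | "Suc i = k" "j < i" | "i \<noteq> j" "Suc i \<noteq> j" "i \<noteq> k" "Suc i \<noteq> k"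
    using jk by linarith
  then show "transfer b j k d (Suc i) \<le> transfer b j k d i"
  proof cases
    case 2
    then show ?thesis
      using steps between[of "Suc i"] d jk by (auto simp: transfer_def)
  next
    case 5
    then show ?thesis
      using between[of i] monotone_onD[OF a, of i k] d jk by (auto simp: transfer_def)
  qed (use steps d jk \<open>a k \<le> a j\<close> in \<open>auto simp: transfer_def\<close>)
qed

lemma sum_lessThan_transfer:
  assumes "j \<noteq> k"
  shows "(\<Sum>i<m. transfer b j k d i) = (\<Sum>i<m. b i) - (if j < m then d else 0) + (if k < m then d else 0)"
proof -
  have "(\<Sum>i<m. transfer b j k d i) = (\<Sum>i<m. b i - (if i = j then d else 0) + (if i = k then d else 0))"
    using assms by (intro sum.cong) (auto simp: transfer_def)
  then show ?thesis
    by (simp add: sum.distrib sum_subtractf)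
qed

lemma transfer_prefix_majorized:
  assumes "prefix_majorized n a b" "j < k" "k < n" "d \<le> b j - a j"
    and between: "\<And>i. j < i \<Longrightarrow> i < k \<Longrightarrow> a i = b i"
  shows "prefix_majorized n a (transfer b j k d)"
proof -
  have prefix: "\<And>m. m \<le> n \<Longrightarrow> (\<Sum>i<m. a i) \<le> (\<Sum>i<m. b i)" and total: "(\<Sum>i<n. a i) = (\<Sum>i<n. b i)"
    using assms(1) unfolding prefix_majorized_def by auto
  have "(\<Sum>i<m. a i) \<le> (\<Sum>i<m. transfer b j k d i)" if "m \<le> n" for m
  proof (cases "j < m \<and> m \<le> k")
    case True
    have "(\<Sum>i<m. b i - a i) = (\<Sum>i<Suc j. b i - a i) + (\<Sum>i = Suc j..<m. b i - a i)"
      using True sum.atLeastLessThan_concat[of 0 "Suc j" m "\<lambda>i. b i - a i"] by (simp add: atLeast0LessThan)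
    also have "(\<Sum>i = Suc j..<m. b i - a i) = 0"
      using True between by (intro sum.neutral) auto
    finally have "(\<Sum>i<m. b i) - (\<Sum>i<m. a i) = (\<Sum>i<j. b i) - (\<Sum>i<j. a i) + (b j - a j)"
      by (simp add: sum_subtractf)
    with prefix[of j] assms(2-4) True show ?thesis
      by (simp add: sum_lessThan_transfer)
  next
    case False
    with prefix[OF that] assms(2) show ?thesis
      by (auto simp: sum_lessThan_transfer)
  qed
  moreover have "(\<Sum>i<n. a i) = (\<Sum>i<n. transfer b j k d i)"
    using total assms(2,3) by (simp add: sum_lessThan_transfer)
  ultimately show ?thesis
    unfolding prefix_majorized_def by blast
qed

lemma card_differences_transfer_less:
  assumes "j < n" "k < n" "j \<noteq> k" "a j \<noteq> b j" "a k \<noteq> b k" "d = b j - a j \<or> d = a k - b k"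
  shows "card {i. i < n \<and> a i \<noteq> transfer b j k d i} < card {i. i < n \<and> a i \<noteq> b i}"
proof -
  let ?D = "\<lambda>c. {i. i < n \<and> a i \<noteq> c i}"
  have "?D (transfer b j k d) \<subseteq> ?D b"
    using assms(4,5) by (auto simp: transfer_def)
  moreover have "j \<notin> ?D (transfer b j k d) \<or> k \<notin> ?D (transfer b j k d)"
    using assms(3,6) by (auto simp: transfer_def)
  then have "?D (transfer b j k d) \<noteq> ?D b"
    using assms(1,2,4,5) by auto
  ultimately show ?thesis
    by (intro psubset_card_mono) auto
qed

lemma prefix_majorized_imp_le:
  fixes f :: "(nat \<Rightarrow> real) \<Rightarrow> real"
  assumes cong: "\<And>c c'. (\<And>i. i < n \<Longrightarrow> c i = c' i) \<Longrightarrow> f c = f c'"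
    and transfer_mono: "\<And>c j k d. j < k \<Longrightarrow> k < n \<Longrightarrow> (\<And>i. i < n \<Longrightarrow> 0 \<le> c i) \<Longrightarrow> 0 \<le> d \<Longrightarrow>
           c k + d \<le> c j - d \<Longrightarrow> f c \<le> f (transfer c j k d)"
    and a: "antimono_on {..<n} a"
    and "antimono_on {..<n} b" "\<And>i. i < n \<Longrightarrow> 0 \<le> b i" "prefix_majorized n a b"
  shows "f b \<le> f a"
  using assms(4-6)
proof (induction "card {i. i < n \<and> a i \<noteq> b i}" arbitrary: b rule: less_induct)
  case (less b)
  show ?case
  proof (cases "\<exists>i<n. a i \<noteq> b i")
    case False
    then show ?thesis
      using cong[of b a] by auto
  next
    case True
    obtain j k where jk: "j < k" "k < n" "a j < b j" "b k < a k"
      and between: "\<And>i. j < i \<Longrightarrow> i < k \<Longrightarrow> a i = b i"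
      using prefix_majorized_obtain_transfer[OF less.prems(3) True] by blast
    define d where "d = min (b j - a j) (a k - b k)"
    have d: "0 \<le> d" "d \<le> b j - a j" "d \<le> a k - b k"
      using jk unfolding d_def by auto
    have "a k \<le> a j"
      using jk by (auto intro: monotone_onD[OF a])
    then have "b k + d \<le> b j - d"
      using d by linarith
    have nonneg: "0 \<le> transfer b j k d i" if "i < n" for i
      using less.prems(2)[OF that] less.prems(2)[OF jk(2)] d \<open>b k + d \<le> b j - d\<close>
      by (auto simp: transfer_def)
    have "f (transfer b j k d) \<le> f a"
    proof (rule less.hyps)
      show "card {i. i < n \<and> a i \<noteq> transfer b j k d i} < card {i. i < n \<and> a i \<noteq> b i}"
        using jk unfolding d_def by (intro card_differences_transfer_less) auto
      show "antimono_on {..<n} (transfer b j k d)"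
        using a less.prems(1) jk(1,2) d(2,3,1) between by (rule transfer_antimono)
      show "prefix_majorized n a (transfer b j k d)"
        using less.prems(3) jk(1,2) d(2) between by (rule transfer_prefix_majorized)
    qed (use nonneg in auto)
    moreover have "f b \<le> f (transfer b j k d)"
      using jk less.prems(2) d \<open>b k + d \<le> b j - d\<close> by (intro transfer_mono) auto
    ultimately show ?thesis
      by simp
  qed
qed

lemma schur_concaveI_transfer:
  fixes f :: "(nat \<Rightarrow> real) \<Rightarrow> real"
  assumes cong: "\<And>c c'. (\<And>i. i < n \<Longrightarrow> c i = c' i) \<Longrightarrow> f c = f c'"
    and permute: "\<And>p c. p permutes {..<n} \<Longrightarrow> f (\<lambda>i. c (p i)) = f c"
    and transfer_mono: "\<And>c j k d. j < k \<Longrightarrow> k < n \<Longrightarrow> (\<And>i. i < n \<Longrightarrow> 0 \<le> c i) \<Longrightarrow> 0 \<le> d \<Longrightarrow>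
           c k + d \<le> c j - d \<Longrightarrow> f c \<le> f (transfer c j k d)"
  shows "schur_concave n f"
  unfolding schur_concave_def
proof (intro allI impI)
  fix a b :: "nat \<Rightarrow> real"
  assume b: "\<forall>i<n. 0 \<le> b i" and "majorized n a b"
  obtain p where p: "p permutes {..<n}" "antimono_on {..<n} (\<lambda>i. a (p i))"
    by (rule obtain_antimono_permutation)
  obtain p' where p': "p' permutes {..<n}" "antimono_on {..<n} (\<lambda>i. b (p' i))"
    by (rule obtain_antimono_permutation)
  have "majorized n (\<lambda>i. a (p i)) (\<lambda>i. b (p' i))"
    using \<open>majorized n a b\<close> by (simp only: majorized_permute[OF p(1) p'(1)])
  with p(2) p'(2) have "prefix_majorized n (\<lambda>i. a (p i)) (\<lambda>i. b (p' i))"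
    by (rule majorized_imp_prefix_majorized)
  moreover have "0 \<le> b (p' i)" if "i < n" for i
    using b permutes_in_image[OF p'(1)] that by simp
  ultimately have "f (\<lambda>i. b (p' i)) \<le> f (\<lambda>i. a (p i))"
    using p(2) p'(2) by (intro prefix_majorized_imp_le[OF cong transfer_mono]) auto
  then show "f b \<le> f a"
    unfolding permute[OF p(1)] permute[OF p'(1)] .
qed

section \<open>Schur-concavity of R_q\<close>

lemma Rq_sqrt_transfer_mono:
  assumes "j < n" "k < n" "j \<noteq> k" "\<And>i. i < n \<Longrightarrow> 0 \<le> c i" "0 \<le> d" "c k + d \<le> c j - d"
  shows "Rq n q (\<lambda>i. sqrt (c i)) \<le> Rq n q (\<lambda>i. sqrt (transfer c j k d i))"
proof (rule Rq_mono_pair[OF assms(1-3)])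
  have "0 \<le> c k" "0 \<le> c j - d"
    using assms by force+
  then show "(sqrt (c j))\<^sup>2 + (sqrt (c k))\<^sup>2 = (sqrt (transfer c j k d j))\<^sup>2 + (sqrt (transfer c j k d k))\<^sup>2"
    using assms(3,5) by (simp add: transfer_def)
  have "c j * c k \<le> (c j - d) * (c k + d)"
    using assms(5,6) mult_nonneg_nonneg[of d "c j - c k - d"] by (simp add: algebra_simps)
  then show "sqrt (c j) * sqrt (c k) \<le> sqrt (transfer c j k d j) * sqrt (transfer c j k d k)"
    using assms(3) by (simp add: transfer_def real_sqrt_mult[symmetric])
qed (use assms in \<open>auto simp: transfer_def\<close>)

theorem theorem2:
  fixes n q :: nat
  assumes "n \<ge> 1" and "q \<ge> 1"
  shows "schur_concave n (\<lambda>a. Rq n q (\<lambda>i. sqrt (a i)))"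
proof (rule schur_concaveI_transfer)
  show "Rq n q (\<lambda>i. sqrt (c i)) = Rq n q (\<lambda>i. sqrt (c' i))" if "\<And>i. i < n \<Longrightarrow> c i = c' i" for c c'
    using that by (intro Rq_cong) simp
  show "Rq n q (\<lambda>i. sqrt (c (p i))) = Rq n q (\<lambda>i. sqrt (c i))" if "p permutes {..<n}" for p c
    using Rq_permute[OF that, where x = "\<lambda>i. sqrt (c i)"] .
  show "Rq n q (\<lambda>i. sqrt (c i)) \<le> Rq n q (\<lambda>i. sqrt (transfer c j k d i))"
    if "j < k" "k < n" "\<And>i. i < n \<Longrightarrow> 0 \<le> c i" "0 \<le> d" "c k + d \<le> c j - d" for c j k d
    using that by (intro Rq_sqrt_transfer_mono) auto
qed

end
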